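(* Let $q\ge 3$ be a prime power, let $d,n\in\mathbb{N}$ with $n\ge 2$, and let $\varpi\colon(\mathbb{F}_q^d)^{\otimes n}\to\mathbb{F}_q$ be an $n$-linear form. Let $E\subset\mathbb{F}_q^d$ have projective index $\alpha$. Suppose there exist an $r$-dimensional subspace $A$ of $(\mathbb{F}_q^d)^{\otimes(n-1)}$, a subspace $B$ of $\mathbb{F}_q^d$ and an index $k\in[n]$ such that (1) $E^{\boxtimes(n-1)}\subset A$, (2) $E\subset B$, (3) $\varpi$ is $(A,B)$-non-degenerate in the $k$-th coordinate, and (4) $|E|>q^{\frac{r+n-1}{n}}\left(1-\alpha\left(1-\frac{2}{q}\right)\right)^{\frac1n}$. Then $\mathbb{F}_q^*\subset\varpi(E^n)$, where $\varpi(E^n)=\{\varpi(x_1\otimes\cdots\otimes x_n): x_1,\dots,x_n\in E\}$ and $\mathbb{F}_q^*=\mathbb{F}_q\setminus\{0\}$.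
   Context: An $n$-linear form on a vector space $V$ over $\mathbb{F}$ is a linear map $\varpi\colon V^{\otimes n}\to\mathbb{F}$; one writes $\varpi(x_1,\dots,x_n)=\varpi(x_1\otimes\cdots\otimes x_n)$. For $E\subset V$, $E^{\boxtimes m}$ denotes the set of pure tensors $\{x_1\otimes\cdots\otimes x_m: x_i\in E\}\subset V^{\otimes m}$ (the image of $E^m$ under $(x_1,\dots,x_m)\mapsto x_1\otimes\cdots\otimes x_m$). For subspaces $A\le V^{\otimes(n-1)}$, $B\le V$ and $k\in[n]$, the form $\varpi$ is $(A,B)$-non-degenerate in the $k$-th coordinate if for every nonzero $y\in B$ the linear functional on $A$ obtained by restricting the linear extension of $x_1\otimes\cdots\otimes x_{n-1}\mapsto\varpi(x_1,\dots,x_{k-1},y,x_k,\dots,x_{n-1})$ (i.e. $y$ inserted in the $k$-th slot) is not identically zero. A set $E\subset\mathbb{F}_q^d$ has projective index $\alpha$ if $\frac{|\{(a,w)\in(\mathbb{F}_q^*\setminus\{1\})\times\mathbb{F}_q^d:\ w\in E,\ aw\in E\}|}{(q-2)|E|}\ge\alpha$. *)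

theory Defs
  imports Complex_Main "HOL-Library.Function_Algebras"
begin

text \<open>The field is a finite field type 'a (so q = CARD('a) is a prime power).
 The space F_q^d is modelled as the functions x :: nat => 'a vanishing outside {..<d}.
 The tensor power (F_q^d)^{(tensor) m} is modelled by its coordinates: functions
 f :: nat list => 'a supported on the multi-indices of length m with entries < d.\<close>

definition vecs :: "nat \<Rightarrow> (nat \<Rightarrow> 'a::field) set" where
  "vecs d = {x. \<forall>i\<ge>d. x i = 0}"

definition idx :: "nat \<Rightarrow> nat \<Rightarrow> nat list set" where
  "idx d m = {is. length is = m \<and> set is \<subseteq> {..<d}}"

definition tens :: "nat \<Rightarrow> nat \<Rightarrow> (nat list \<Rightarrow> 'a::field) set" where
  "tens d m = {f. \<forall>is. is \<notin> idx d m \<longrightarrow> f is = 0}"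

definition fscale :: "'a::field \<Rightarrow> ('b \<Rightarrow> 'a) \<Rightarrow> ('b \<Rightarrow> 'a)" where
  "fscale c f = (\<lambda>i. c * f i)"

definition ptensor :: "(nat \<Rightarrow> 'a::field) list \<Rightarrow> (nat list \<Rightarrow> 'a)" where
  "ptensor xs = (\<lambda>is. if length is = length xs
                      then (\<Prod>j<length xs. (xs ! j) (is ! j)) else 0)"

definition boxpow :: "(nat \<Rightarrow> 'a::field) set \<Rightarrow> nat \<Rightarrow> (nat list \<Rightarrow> 'a) set" where
  "boxpow E m = {ptensor xs | xs. length xs = m \<and> set xs \<subseteq> E}"

definition nlinear_form :: "nat \<Rightarrow> nat \<Rightarrow> ((nat list \<Rightarrow> 'a::field) \<Rightarrow> 'a) \<Rightarrow> bool" where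
  "nlinear_form d n w \<longleftrightarrow>
     (\<forall>f\<in>tens d n. \<forall>g\<in>tens d n. w (\<lambda>i. f i + g i) = w f + w g) \<and>
     (\<forall>c. \<forall>f\<in>tens d n. w (fscale c f) = c * w f)"

text \<open>Linear map V^{(tensor)(n-1)} -> V^{(tensor) n} inserting y into slot k (1-based):
 it is the linear extension of x_1(x)...(x)x_{n-1} |-> x_1(x)..x_{k-1}(x)y(x)x_k(x)...(x)x_{n-1}.\<close>
definition insert_slot :: "nat \<Rightarrow> nat \<Rightarrow> (nat \<Rightarrow> 'a::field) \<Rightarrow> (nat list \<Rightarrow> 'a) \<Rightarrow> (nat list \<Rightarrow> 'a)" where
  "insert_slot n k y f = (\<lambda>is. if length is = n
       then y (is ! (k - 1)) * f (take (k - 1) is @ drop k is) else 0)"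

definition nondeg :: "nat \<Rightarrow> ((nat list \<Rightarrow> 'a::field) \<Rightarrow> 'a) \<Rightarrow> (nat list \<Rightarrow> 'a) set
                      \<Rightarrow> (nat \<Rightarrow> 'a) set \<Rightarrow> nat \<Rightarrow> bool" where
  "nondeg n w A B k \<longleftrightarrow>
     (\<forall>y\<in>B. y \<noteq> (\<lambda>_. 0) \<longrightarrow> (\<exists>a\<in>A. w (insert_slot n k y a) \<noteq> 0))"

definition has_proj_index :: "(nat \<Rightarrow> 'a::{finite,field}) set \<Rightarrow> real \<Rightarrow> bool" where
  "has_proj_index E \<alpha> \<longleftrightarrow>
     real (card {(a, w). a \<in> UNIV - {0, 1} \<and> w \<in> E \<and> fscale a w \<in> E})
       / ((real (card (UNIV :: 'a set)) - 2) * real (card E)) \<ge> \<alpha>"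

definition form_image :: "((nat list \<Rightarrow> 'a::field) \<Rightarrow> 'a) \<Rightarrow> (nat \<Rightarrow> 'a) set \<Rightarrow> nat \<Rightarrow> 'a set" where
  "form_image w E n = w ` boxpow E n"

end

(*
  Suppose some t \<noteq> 0 is not a value of varpi on E^n, and for T in A let h T be the number
  of y in E with varpi(y inserted into slot k of T) = t. By nondegeneracy every nonzero y, and
  every pair y, y' of non-collinear vectors, takes each value (pair of values) on A equally
  often; this determines the first two moments of h. Since h vanishes on the set E^[n-1] of
  pure tensors, which lies in A, Cauchy-Schwarz gives |E^[n-1]| |E|^2 <= |A| (q |E| - P), where
  P counts the pairs (a, w) with a \<notin> {0, 1} and w, a w in E. Conversely, counting the fibres
  of (x_1, ..., x_m) \<mapsto> x_1 \<otimes> ... \<otimes> x_m and Jensen's inequality give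
  |E^[m]| >= |E|^m / q^(m-1); with |A| <= q^r this contradicts the lower bound on |E|.
*)

theory Submission
  imports Defs "HOL-Analysis.Convex"
begin

section \<open>Coordinate spaces over a finite field\<close>

interpretation fun_space: vector_space "fscale :: 'a::field \<Rightarrow> ('b \<Rightarrow> 'a) \<Rightarrow> 'b \<Rightarrow> 'a"
  by unfold_locales (auto simp: fscale_def algebra_simps)

lemma finite_supported_funs:
  assumes "finite D"
  shows "finite {f :: 'b \<Rightarrow> 'a::{finite,zero}. \<forall>x. x \<notin> D \<longrightarrow> f x = 0}"
  using finite_set_of_finite_funs[OF assms finite_UNIV, of 0] by simp

lemma finite_vecs: "finite (vecs d :: (nat \<Rightarrow> 'a::{finite,field}) set)"
  unfolding vecs_def using finite_supported_funs[of "{..<d}"] by (simp add: not_less)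

lemma finite_tens: "finite (tens d m :: (nat list \<Rightarrow> 'a::{finite,field}) set)"
proof -
  have "finite (idx d m)"
    unfolding idx_def using finite_lists_length_eq[of "{..<d}" m] by (simp add: conj_commute)
  then show ?thesis unfolding tens_def by (rule finite_supported_funs)
qed

lemma card_subspace_le:
  fixes A :: "('b \<Rightarrow> 'a::{finite,field}) set"
  assumes "finite A"
  shows "card A \<le> card (UNIV :: 'a set) ^ fun_space.dim A"
proof -
  obtain \<beta> where \<beta>: "\<beta> \<subseteq> A" "A \<subseteq> fun_space.span \<beta>" "card \<beta> = fun_space.dim A"
    by (rule fun_space.basis_exists)
  have fin: "finite \<beta>" using \<beta>(1) assms finite_subset by blast
  let ?comb = "\<lambda>u. \<Sum>v\<in>\<beta>. fscale (u v) v"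
  have "?comb u \<in> ?comb ` (\<beta> \<rightarrow>\<^sub>E UNIV)" for u
  proof (rule image_eqI[where x="restrict u \<beta>"])
    show "?comb u = ?comb (restrict u \<beta>)" by (intro sum.cong) simp_all
  qed (simp add: restrict_PiE_iff del: restrict_PiE)
  then have span_eq: "fun_space.span \<beta> = ?comb ` (\<beta> \<rightarrow>\<^sub>E UNIV)"
    unfolding fun_space.span_finite[OF fin] by (auto simp del: PiE_iff)
  have "card A \<le> card (?comb ` (\<beta> \<rightarrow>\<^sub>E (UNIV :: 'a set)))"
    using \<beta>(2) unfolding span_eq by (intro card_mono finite_imageI finite_PiE fin finite_UNIV)
  also have "\<dots> \<le> card (\<beta> \<rightarrow>\<^sub>E (UNIV :: 'a set))"
    by (intro card_image_le finite_PiE fin finite_UNIV)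
  also have "\<dots> = card (UNIV :: 'a set) ^ card \<beta>"
    by (simp only: card_PiE[OF fin] prod_constant)
  finally show ?thesis by (simp only: \<beta>(3))
qed

lemma card_subspace_eq_mult_card_fiber:
  fixes A :: "('b \<Rightarrow> 'a::field) set" and f :: "('b \<Rightarrow> 'a) \<Rightarrow> 'c::{ab_group_add,finite}"
  assumes fin: "finite A" and sub: "fun_space.subspace A"
    and add: "\<And>a b. a \<in> A \<Longrightarrow> b \<in> A \<Longrightarrow> f (a + b) = f a + f b"
    and surj: "\<And>v. \<exists>a\<in>A. f a = v"
  shows "card A = card (UNIV :: 'c set) * card {a\<in>A. f a = v}"
proof -
  have card_fiber: "card {a\<in>A. f a = u} = card {a\<in>A. f a = 0}" for u
  proof -
    obtain a0 where a0: "a0 \<in> A" "f a0 = u" using surj by blast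
    have "{a\<in>A. f a = u} = (\<lambda>a. a + a0) ` {a\<in>A. f a = 0}"
    proof (intro equalityI subsetI)
      fix a assume a: "a \<in> {a\<in>A. f a = u}"
      have "a - a0 \<in> A" using a a0(1) sub by (simp add: fun_space.subspace_diff)
      moreover have "f (a - a0) + u = u" using add[OF \<open>a - a0 \<in> A\<close> a0(1)] a a0(2) by simp
      ultimately show "a \<in> (\<lambda>a. a + a0) ` {a\<in>A. f a = 0}"
        by (intro rev_image_eqI[of "a - a0"]) auto
    qed (use add a0 sub fun_space.subspace_add in auto)
    then show ?thesis by (simp add: card_image inj_on_def)
  qed
  have "card A = (\<Sum>u\<in>UNIV. card {a\<in>A. f a = u})"
    using sum.group[OF fin finite_UNIV, of f "\<lambda>_. 1 :: nat"] by (simp flip: card_eq_sum)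
  also have "\<dots> = (\<Sum>u\<in>(UNIV :: 'c set). card {a\<in>A. f a = v})"
    by (intro sum.cong refl trans[OF card_fiber card_fiber[symmetric]])
  also have "\<dots> = card (UNIV :: 'c set) * card {a\<in>A. f a = v}"
    by (simp only: sum_constant of_nat_id)
  finally show ?thesis .
qed

lemma card_UNIV_field_ge_2: "2 \<le> card (UNIV :: 'a::{finite,field} set)"
proof -
  have "card {0, 1 :: 'a} \<le> card (UNIV :: 'a set)" by (rule card_mono) simp_all
  then show ?thesis by simp
qed

lemma real_card_UNIV_minus_2:
  "real (card (UNIV :: 'a::{finite,field} set) - 2) = real (card (UNIV :: 'a set)) - 2"
  using card_UNIV_field_ge_2[where 'a='a] by (simp add: of_nat_diff)

lemma card_UNIV_Diff_zero_one: "card (UNIV - {0, 1 :: 'a::{finite,field}}) = card (UNIV :: 'a set) - 2"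
  by (simp add: card_Diff_subset numeral_2_eq_2)

lemma fscale_eq_self_iff: "fscale a w = w \<longleftrightarrow> a = 1 \<or> w = 0"
  using fun_space.scale_cancel_right[of a w 1] by simp

lemma sum_card_filter_swap:
  assumes "finite A" "finite E"
  shows "(\<Sum>T\<in>A. card {y\<in>E. R y T}) = (\<Sum>y\<in>E. card {T\<in>A. R y T})"
proof -
  have "card {y\<in>E. R y T} = (\<Sum>y\<in>E. if R y T then 1 else 0)" for T
    using assms(2) by (simp add: sum.inter_filter[symmetric])
  moreover have "card {T\<in>A. R y T} = (\<Sum>T\<in>A. if R y T then 1 else 0)" for y
    using assms(1) by (simp add: sum.inter_filter[symmetric])
  ultimately show ?thesis by (simp only: sum.swap[of _ A])
qed

lemma sum_squared_le_sum_of_squares_vanishing: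
  fixes h :: "'b \<Rightarrow> real"
  assumes fin: "finite A" and S: "S \<subseteq> A" and zero: "\<And>T. T \<in> S \<Longrightarrow> h T = 0"
  shows "(\<Sum>T\<in>A. h T) ^ 2 \<le> (real (card A) - real (card S)) * (\<Sum>T\<in>A. h T ^ 2)"
proof -
  have "(\<Sum>T\<in>A. h T) = (\<Sum>T\<in>A - S. h T)"
    using fin S zero by (intro sum.mono_neutral_right) auto
  also have "\<dots> ^ 2 \<le> (\<Sum>T\<in>A - S. h T ^ 2) * real (card (A - S))"
    by (rule sum_squared_le_sum_of_squares)
  also have "\<dots> \<le> (\<Sum>T\<in>A. h T ^ 2) * (real (card A) - real (card S))"
    using fin S
    by (intro mult_mono sum_mono2 sum_nonneg) (auto simp: card_Diff_subset finite_subset of_nat_diff card_mono)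
  finally show ?thesis by (simp add: mult.commute)
qed

section \<open>Inserting a vector into a slot of a tensor\<close>

lemma id_take_nth_drop_slot:
  assumes "k \<in> {1..length xs}"
  shows "xs = take (k - 1) xs @ xs ! (k - 1) # drop k xs"
proof -
  have "k - 1 < length xs" "Suc (k - 1) = k" using assms by auto
  then show ?thesis by (metis id_take_nth_drop)
qed

lemma insert_slot_tens:
  assumes y: "y \<in> vecs d" and T: "T \<in> tens d (n - 1)" and k: "k \<in> {1..n}"
  shows "insert_slot n k y T \<in> tens d n"
  unfolding tens_def mem_Collect_eq
proof (intro allI impI)
  fix "is" :: "nat list" assume is_out: "is \<notin> idx d n"
  show "insert_slot n k y T is = 0"
  proof (cases "length is = n")
    case True
    have "is = take (k - 1) is @ is ! (k - 1) # drop k is"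
      using id_take_nth_drop_slot[of k "is"] True k by simp
    then have "set is = set (take (k - 1) is) \<union> {is ! (k - 1)} \<union> set (drop k is)"
      by (metis Un_insert_right insert_is_Un list.simps(15) set_append sup_commute)
    then have "is ! (k - 1) \<ge> d \<or> take (k - 1) is @ drop k is \<notin> idx d (n - 1)"
      using is_out True k by (auto simp: idx_def)
    then show ?thesis
      using y T by (auto simp: insert_slot_def vecs_def tens_def)
  qed (simp add: insert_slot_def)
qed

lemma insert_slot_add:
  "insert_slot n k y (T + T') = insert_slot n k y T + insert_slot n k y T'"
  by (simp add: insert_slot_def fun_eq_iff algebra_simps)

lemma insert_slot_fscale: "insert_slot n k y (fscale c T) = fscale c (insert_slot n k y T)"
  by (simp add: insert_slot_def fscale_def fun_eq_iff)

lemma insert_slot_linear_left: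
  "insert_slot n k (fscale a y + fscale b y') T
     = fscale a (insert_slot n k y T) + fscale b (insert_slot n k y' T)"
  by (simp add: insert_slot_def fscale_def fun_eq_iff algebra_simps)

lemma nlinear_form_add:
  "nlinear_form d n w \<Longrightarrow> f \<in> tens d n \<Longrightarrow> g \<in> tens d n \<Longrightarrow> w (f + g) = w f + w g"
  unfolding nlinear_form_def plus_fun_def by blast

lemma nlinear_form_fscale:
  "nlinear_form d n w \<Longrightarrow> f \<in> tens d n \<Longrightarrow> w (fscale c f) = c * w f"
  unfolding nlinear_form_def by blast

lemma tens_fscale: "f \<in> tens d m \<Longrightarrow> fscale c f \<in> tens d m"
  by (simp add: tens_def fscale_def)

lemma ptensor_eq_prod_list:
  "ptensor xs = (\<lambda>is. if length is = length xs
     then prod_list (map (\<lambda>(x, i). x i) (zip xs is)) else 0)"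
proof -
  have "(\<Prod>j<length xs. (xs ! j) (is ! j)) = prod_list (map (\<lambda>(x, i). x i) (zip xs is))"
    if "length is = length xs" for "is"
    using that
  proof (induction xs arbitrary: "is")
    case (Cons x xs)
    then obtain i is' where "is = i # is'" by (cases "is") auto
    with Cons show ?case by (simp del: prod.lessThan_Suc add: prod.lessThan_Suc_shift)
  qed simp
  then show ?thesis by (simp add: ptensor_def fun_eq_iff)
qed

lemma insert_slot_ptensor:
  assumes len: "length xs = n - 1" and k: "k \<in> {1..n}"
  shows "insert_slot n k y (ptensor xs) = ptensor (take (k - 1) xs @ y # drop (k - 1) xs)"
proof
  fix "is" :: "nat list"
  let ?ys = "take (k - 1) xs @ y # drop (k - 1) xs"
  let ?ev = "\<lambda>(x :: nat \<Rightarrow> 'a, i :: nat). x i"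
  have len_ys: "length ?ys = n" using len k by auto
  show "insert_slot n k y (ptensor xs) is = ptensor ?ys is"
  proof (cases "length is = n")
    case True
    have len_take: "length (take (k - 1) xs) = length (take (k - 1) is)" using len True k by auto
    have "is = take (k - 1) is @ is ! (k - 1) # drop k is"
      using id_take_nth_drop_slot[of k "is"] True k by simp
    then have zip_ys: "zip ?ys is = zip (take (k - 1) xs) (take (k - 1) is)
        @ (y, is ! (k - 1)) # zip (drop (k - 1) xs) (drop k is)"
      by (metis len_take zip_Cons_Cons zip_append)
    have zip_xs: "zip xs (take (k - 1) is @ drop k is)
        = zip (take (k - 1) xs) (take (k - 1) is) @ zip (drop (k - 1) xs) (drop k is)"
      using zip_append[OF len_take, of "drop (k - 1) xs" "drop k is"] by simp
    have "length (take (k - 1) is @ drop k is) = length xs" using True len k by auto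
    then have "insert_slot n k y (ptensor xs) is
        = y (is ! (k - 1)) * prod_list (map ?ev (zip xs (take (k - 1) is @ drop k is)))"
      using True by (simp add: insert_slot_def ptensor_eq_prod_list)
    also have "\<dots> = prod_list (map ?ev (zip ?ys is))"
      unfolding zip_ys zip_xs by (simp add: mult.left_commute)
    also have "\<dots> = ptensor ?ys is"
      using True len_ys by (simp add: ptensor_eq_prod_list)
    finally show ?thesis .
  next
    case False
    moreover have "length is \<noteq> length ?ys" using False len_ys by simp
    ultimately show ?thesis unfolding insert_slot_def ptensor_def by (simp only: if_False)
  qed
qed

lemma insert_slot_boxpow:
  assumes "T \<in> boxpow E (n - 1)" "y \<in> E" "k \<in> {1..n}"
  shows "insert_slot n k y T \<in> boxpow E n"
proof -
  obtain xs where xs: "T = ptensor xs" "length xs = n - 1" "set xs \<subseteq> E"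
    using assms(1) unfolding boxpow_def by blast
  let ?ys = "take (k - 1) xs @ y # drop (k - 1) xs"
  have "length ?ys = n" using xs(2) assms(3) by auto
  moreover have "set ?ys \<subseteq> E"
    using xs(3) assms(2) set_take_subset[of "k - 1" xs] set_drop_subset[of "k - 1" xs] by auto
  ultimately show ?thesis
    unfolding xs(1) insert_slot_ptensor[OF xs(2) assms(3)] boxpow_def by blast
qed

section \<open>Counting pure tensors\<close>

lemma ptensor_list_update:
  assumes "length ys = m" "length is = m" "i < m"
  shows "ptensor ys (is[i := a]) = (ys ! i) a * (\<Prod>j\<in>{..<m} - {i}. (ys ! j) (is ! j))"
proof -
  have "ptensor ys (is[i := a]) = (\<Prod>j<m. (ys ! j) (is[i := a] ! j))"
    using assms by (simp add: ptensor_def)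
  also have "\<dots> = (ys ! i) (is[i := a] ! i) * (\<Prod>j\<in>{..<m} - {i}. (ys ! j) (is[i := a] ! j))"
    using assms(3) by (subst prod.remove[of _ i]) auto
  also have "\<dots> = (ys ! i) a * (\<Prod>j\<in>{..<m} - {i}. (ys ! j) (is ! j))"
    using assms by (intro arg_cong2[where f="(*)"] prod.cong) auto
  finally show ?thesis .
qed

lemma ptensor_nonzero_at:
  assumes "0 \<notin> set xs"
  obtains "is" where "length is = length xs" "\<forall>j<length xs. (xs ! j) (is ! j) \<noteq> 0"
proof
  let ?is = "map (\<lambda>x. SOME i. x i \<noteq> 0) xs"
  show "length ?is = length xs" by simp
  show "\<forall>j<length xs. (xs ! j) (?is ! j) \<noteq> 0"
  proof (intro allI impI)
    fix j assume j: "j < length xs"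
    then have "xs ! j \<noteq> 0" using assms nth_mem[OF j] by metis
    then have "\<exists>i. (xs ! j) i \<noteq> 0" by (auto simp: fun_eq_iff)
    then show "(xs ! j) (?is ! j) \<noteq> 0" using j someI_ex[of "\<lambda>i. (xs ! j) i \<noteq> 0"] by simp
  qed
qed

lemma ptensor_nonzero:
  assumes "0 \<notin> set xs"
  shows "ptensor xs \<noteq> 0"
proof -
  obtain "is" where "length is = length xs" "\<forall>j<length xs. (xs ! j) (is ! j) \<noteq> 0"
    using ptensor_nonzero_at[OF assms] .
  then have "ptensor xs is \<noteq> 0" by (simp add: ptensor_def)
  then show ?thesis by auto
qed

lemma ptensor_replicate_zero:
  assumes "1 \<le> m"
  shows "ptensor (replicate m 0) = 0"
proof
  fix "is" :: "nat list"
  have "(\<Prod>j<m. (0 :: 'a::field)) = 0" using assms by simp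
  then show "ptensor (replicate m 0) is = (0 :: nat list \<Rightarrow> 'a) is" by (simp add: ptensor_def)
qed

lemma ptensor_eq_imp_eq:
  assumes len: "length ys = m" "length ys' = m" "length is = m"
    and eq: "ptensor ys = ptensor ys'"
    and coords: "\<forall>j<m. (ys ! j) (is ! j) = (ys' ! j) (is ! j)"
    and nz: "\<forall>j<m. (ys ! j) (is ! j) \<noteq> 0"
  shows "ys = ys'"
proof (rule nth_equalityI)
  fix i assume "i < length ys"
  then have i: "i < m" using len by simp
  show "ys ! i = ys' ! i"
  proof
    fix a
    let ?rest = "\<lambda>zs. \<Prod>j\<in>{..<m} - {i}. (zs ! j) (is ! j)"
    have "?rest ys = ?rest ys'" using coords by (intro prod.cong) auto
    moreover have "?rest ys \<noteq> 0" using nz by simp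
    moreover have "(ys ! i) a * ?rest ys = (ys' ! i) a * ?rest ys'"
      using ptensor_list_update[OF len(1,3) i] ptensor_list_update[OF len(2,3) i] eq by metis
    ultimately show "(ys ! i) a = (ys' ! i) a" by simp
  qed
qed (use len in simp)

lemma ptensor_eq_imp_eq_butlast:
  assumes len: "length ys = m" "length ys' = m" "length is = m" and m: "1 \<le> m"
    and eq: "ptensor ys = ptensor ys'"
    and coords: "\<forall>j<m - 1. (ys ! j) (is ! j) = (ys' ! j) (is ! j)"
    and nz: "\<forall>j<m. (ys ! j) (is ! j) \<noteq> 0"
  shows "ys = ys'"
proof (rule ptensor_eq_imp_eq[OF len eq _ nz])
  \<comment> \<open>The last coordinate is determined by the others, since the product of all of them is
    \<open>ptensor ys is\<close>.\<close>
  let ?init = "\<lambda>zs. \<Prod>j<m - 1. (zs ! j) (is ! j)"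
  have split: "ptensor zs is = ?init zs * (zs ! (m - 1)) (is ! (m - 1))" if "length zs = m" for zs
    using that len(3) m prod.lessThan_Suc[of _ "m - 1"] by (simp add: ptensor_def)
  have "?init ys = ?init ys'" using coords by (intro prod.cong) auto
  moreover have "?init ys \<noteq> 0" using nz by simp
  ultimately have "(ys ! (m - 1)) (is ! (m - 1)) = (ys' ! (m - 1)) (is ! (m - 1))"
    using split[OF len(1)] split[OF len(2)] eq by (metis mult_left_cancel)
  then show "\<forall>j<m. (ys ! j) (is ! j) = (ys' ! j) (is ! j)"
    using coords by (metis One_nat_def Suc_pred less_Suc_eq m less_le_trans zero_less_one)
qed

lemma card_ptensor_fiber_le:
  fixes E :: "(nat \<Rightarrow> 'a::{finite,field}) set"
  assumes m: "1 \<le> m" and zero: "0 \<notin> E"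
  shows "card {ys. length ys = m \<and> set ys \<subseteq> E \<and> ptensor ys = W}
    \<le> (card (UNIV :: 'a set) - 1) ^ (m - 1)"
proof (cases "{ys. length ys = m \<and> set ys \<subseteq> E \<and> ptensor ys = W} = {}")
  case False
  let ?F = "{ys. length ys = m \<and> set ys \<subseteq> E \<and> ptensor ys = W}"
  obtain xs where xs: "xs \<in> ?F" using False by blast
  then obtain "is" where "is": "length is = m" "\<forall>j<m. (xs ! j) (is ! j) \<noteq> 0"
    using ptensor_nonzero_at[of xs] zero by auto
  have coord_nz: "\<forall>j<m. (ys ! j) (is ! j) \<noteq> 0" if "ys \<in> ?F" for ys
  proof -
    have "length ys = m" "ptensor ys is = ptensor xs is" using that xs by auto
    then have "(\<Prod>j<m. (ys ! j) (is ! j)) = (\<Prod>j<m. (xs ! j) (is ! j))"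
      using xs "is"(1) by (simp add: ptensor_def)
    also have "\<dots> \<noteq> 0" using "is"(2) by simp
    finally show ?thesis by simp
  qed
  define coords where "coords ys = map (\<lambda>j. (ys ! j) (is ! j)) [0..<m - 1]"
    for ys :: "(nat \<Rightarrow> 'a) list"
  have "inj_on coords ?F"
  proof (rule inj_onI)
    fix ys ys' assume ys: "ys \<in> ?F" and ys': "ys' \<in> ?F" and "coords ys = coords ys'"
    then have "\<forall>j<m - 1. (ys ! j) (is ! j) = (ys' ! j) (is ! j)"
      by (metis (no_types, lifting) coords_def diff_zero length_upt nth_map nth_upt plus_nat.add_0)
    then show "ys = ys'"
      using ys ys' "is"(1) m coord_nz[OF ys] by (intro ptensor_eq_imp_eq_butlast[of ys m ys' "is"]) auto
  qed
  moreover have "coords ` ?F \<subseteq> {cs. set cs \<subseteq> UNIV - {0} \<and> length cs = m - 1}"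
    using coord_nz by (auto simp: coords_def)
  ultimately have "card ?F \<le> card {cs. set cs \<subseteq> UNIV - {0 :: 'a} \<and> length cs = m - 1}"
    by (intro card_inj_on_le) (simp_all add: finite_lists_length_eq)
  also have "\<dots> = (card (UNIV :: 'a set) - 1) ^ (m - 1)"
    by (simp add: card_lists_length_eq)
  finally show ?thesis .
qed (metis card.empty zero_le)

lemma card_lists_le_card_ptensor:
  fixes E :: "(nat \<Rightarrow> 'a::{finite,field}) set"
  assumes fin: "finite E" and zero: "0 \<notin> E" and m: "1 \<le> m"
  shows "real (card E) ^ m \<le> real (card (ptensor ` {ys. set ys \<subseteq> E \<and> length ys = m}))
    * (real (card (UNIV :: 'a set)) - 1) ^ (m - 1)"
proof -
  let ?L = "{ys. set ys \<subseteq> E \<and> length ys = m}"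
  let ?fiber = "\<lambda>W. {ys. length ys = m \<and> set ys \<subseteq> E \<and> ptensor ys = W}"
  have "card E ^ m = card ?L" using card_lists_length_eq[OF fin] by simp
  also have "?L = (\<Union>W\<in>ptensor ` ?L. ?fiber W)" by auto
  also have "card \<dots> \<le> (\<Sum>W\<in>ptensor ` ?L. card (?fiber W))"
    by (rule card_UN_le) (simp add: finite_lists_length_eq fin)
  also have "\<dots> \<le> card (ptensor ` ?L) * (card (UNIV :: 'a set) - 1) ^ (m - 1)"
    using sum_bounded_above[of "ptensor ` ?L" "\<lambda>W. card (?fiber W)"]
      card_ptensor_fiber_le[OF m zero] by simp
  finally have "real (card E ^ m) \<le> real (card (ptensor ` ?L) * (card (UNIV :: 'a set) - 1) ^ (m - 1))"
    by (simp only: of_nat_le_iff)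
  moreover have "real (card (UNIV :: 'a set) - 1) = real (card (UNIV :: 'a set)) - 1"
    using card_UNIV_field_ge_2[where 'a='a] by (simp add: of_nat_diff)
  ultimately show ?thesis by simp
qed

text \<open>Jensen's inequality for the convex function \<open>x \<mapsto> x ^ m\<close> at the points \<open>a\<close> and \<open>1\<close>
  with weights \<open>Q\<close> and \<open>1\<close>.\<close>
lemma jensen_power_two_points:
  fixes a Q :: real
  assumes a: "0 \<le> a" and Q: "0 < Q" and m: "1 \<le> m"
  shows "(Q * a + 1) ^ m \<le> (Q + 1) ^ (m - 1) * (Q * a ^ m + 1)"
  using m
proof (induction m rule: dec_induct)
  case (step m)
  have "0 \<le> (a ^ m - 1) * (a - 1)"
  proof (cases "1 \<le> a")
    case True
    then show ?thesis using one_le_power[OF True, of m] by simp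
  next
    case False
    then have "a ^ m \<le> 1" using a by (intro power_le_one) auto
    with False show ?thesis by (simp add: mult_nonpos_nonpos)
  qed
  then have "0 \<le> Q * ((a ^ m - 1) * (a - 1))" using Q by simp
  then have step_ineq: "(Q * a ^ m + 1) * (Q * a + 1) \<le> (Q + 1) * (Q * a ^ Suc m + 1)"
    by (simp add: algebra_simps)
  have "(Q * a + 1) ^ Suc m = (Q * a + 1) ^ m * (Q * a + 1)" by simp
  also have "\<dots> \<le> (Q + 1) ^ (m - 1) * (Q * a ^ m + 1) * (Q * a + 1)"
    using step.IH a Q by (intro mult_right_mono) auto
  also have "\<dots> \<le> (Q + 1) ^ (m - 1) * ((Q + 1) * (Q * a ^ Suc m + 1))"
    unfolding mult.assoc using step_ineq Q by (intro mult_left_mono) auto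
  also have "\<dots> = (Q + 1) ^ (Suc m - 1) * (Q * a ^ Suc m + 1)"
    using step.hyps by (cases m) auto
  finally show ?case .
qed simp

lemma power_add_one_le:
  fixes e I b Q :: real
  assumes e: "0 \<le> e" and Q: "0 < Q" and m: "1 \<le> m"
    and count: "e ^ m \<le> I * Q ^ (m - 1)" and b: "I + 1 \<le> b"
  shows "(e + 1) ^ m \<le> b * (Q + 1) ^ (m - 1)"
proof -
  define a where "a = e / Q"
  have "0 \<le> a" "e = Q * a" using e Q by (simp_all add: a_def)
  then have "(e + 1) ^ m \<le> (Q + 1) ^ (m - 1) * (Q * a ^ m + 1)"
    using jensen_power_two_points[OF _ Q m] by simp
  also have "Q * a ^ m = e ^ m / Q ^ (m - 1)"
  proof -
    have "Q ^ m = Q * Q ^ (m - 1)" using m by (cases m) simp_all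
    then show ?thesis using Q by (simp add: a_def power_divide)
  qed
  also have "\<dots> \<le> I" using count Q by (simp add: divide_le_eq mult.commute)
  finally show ?thesis using b Q by (smt (verit) mult.commute mult_left_mono zero_le_power)
qed

lemma finite_boxpow:
  assumes "finite E"
  shows "finite (boxpow E m)"
proof -
  have "boxpow E m = ptensor ` {ys. set ys \<subseteq> E \<and> length ys = m}" by (auto simp: boxpow_def)
  then show ?thesis using assms by (simp add: finite_lists_length_eq)
qed

lemma zero_in_boxpow:
  assumes "0 \<in> E" "1 \<le> m"
  shows "0 \<in> boxpow E m"
proof -
  have "set (replicate m 0) \<subseteq> E" using assms(1) by (simp add: set_replicate_conv_if)
  then show ?thesis unfolding boxpow_def
    by (intro CollectI exI[of _ "replicate m 0"]) (simp add: ptensor_replicate_zero[OF assms(2)])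
qed

lemma card_boxpow_bound:
  fixes E :: "(nat \<Rightarrow> 'a::{finite,field}) set"
  assumes fin: "finite E" and m: "1 \<le> m"
  shows "real (card E) ^ m \<le> real (card (boxpow E m)) * real (card (UNIV :: 'a set)) ^ (m - 1)"
proof -
  define q where "q = real (card (UNIV :: 'a set))"
  define E0 where "E0 = E - {0}"
  let ?I = "ptensor ` {ys. set ys \<subseteq> E0 \<and> length ys = m}"
  have q: "1 < q" using card_UNIV_field_ge_2[where 'a='a] by (simp add: q_def)
  have count: "real (card E0) ^ m \<le> real (card ?I) * (q - 1) ^ (m - 1)"
    unfolding q_def using fin m by (intro card_lists_le_card_ptensor) (auto simp: E0_def)
  have I_sub: "?I \<subseteq> boxpow E m" by (auto simp: boxpow_def E0_def)
  show ?thesis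
  proof (cases "0 \<in> E")
    case False
    then have "real (card E) ^ m \<le> real (card ?I) * (q - 1) ^ (m - 1)"
      using count by (simp add: E0_def)
    also have "\<dots> \<le> real (card (boxpow E m)) * q ^ (m - 1)"
      using card_mono[OF finite_boxpow[OF fin] I_sub] q by (intro mult_mono power_mono) auto
    finally show ?thesis by (simp add: q_def)
  next
    case True
    have "0 \<notin> ?I" using ptensor_nonzero by (fastforce simp: E0_def)
    then have "card (insert 0 ?I) = card ?I + 1"
      using finite_subset[OF I_sub finite_boxpow[OF fin]] by simp
    moreover have "card (insert 0 ?I) \<le> card (boxpow E m)"
      using I_sub zero_in_boxpow[OF True m] by (intro card_mono finite_boxpow fin) auto
    ultimately have "real (card ?I) + 1 \<le> real (card (boxpow E m))" by linarith
    then have "(real (card E0) + 1) ^ m \<le> real (card (boxpow E m)) * q ^ (m - 1)"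
      using power_add_one_le[OF _ _ m count] q by simp
    moreover have "card E = card E0 + 1" using card_Suc_Diff1[OF fin True] by (simp add: E0_def)
    ultimately show ?thesis by (simp add: q_def add.commute)
  qed
qed

section \<open>Projective and noncollinear pairs\<close>

definition proj_pairs :: "('b \<Rightarrow> 'a::field) set \<Rightarrow> ('a \<times> ('b \<Rightarrow> 'a)) set" where
  "proj_pairs E = {(a, w). a \<in> UNIV - {0, 1} \<and> w \<in> E \<and> fscale a w \<in> E}"

definition noncollinear_pairs :: "('b \<Rightarrow> 'a::field) set \<Rightarrow> (('b \<Rightarrow> 'a) \<times> ('b \<Rightarrow> 'a)) set" where
  "noncollinear_pairs E = {(y, y'). y \<in> E \<and> y' \<in> E \<and> (\<forall>c. y' \<noteq> fscale c y)}"

lemma finite_proj_pairs: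
  fixes E :: "('b \<Rightarrow> 'a::{finite,field}) set"
  assumes "finite E"
  shows "finite (proj_pairs E)"
proof (rule finite_subset)
  show "proj_pairs E \<subseteq> UNIV \<times> E" by (auto simp: proj_pairs_def)
qed (use assms in simp)

lemma card_proj_pairs_le:
  fixes E :: "('b \<Rightarrow> 'a::{finite,field}) set"
  assumes "finite E"
  shows "real (card (proj_pairs E)) \<le> (real (card (UNIV :: 'a set)) - 2) * real (card E)"
proof -
  have "card (proj_pairs E) \<le> card ((UNIV - {0, 1 :: 'a}) \<times> E)"
    using assms by (intro card_mono) (auto simp: proj_pairs_def)
  then have "card (proj_pairs E) \<le> (card (UNIV :: 'a set) - 2) * card E"
    by (simp only: card_cartesian_product card_UNIV_Diff_zero_one)
  then show ?thesis by (metis of_nat_le_iff of_nat_mult real_card_UNIV_minus_2)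
qed

lemma proj_pairs_insert_zero:
  assumes "0 \<notin> E"
  shows "proj_pairs (insert 0 E) = proj_pairs E \<union> (UNIV - {0, 1}) \<times> {0}"
  using assms by (auto simp: proj_pairs_def)

lemma card_proj_pairs_insert_zero:
  fixes E :: "('b \<Rightarrow> 'a::{finite,field}) set"
  assumes "finite E" "0 \<notin> E"
  shows "card (proj_pairs (insert 0 E)) = card (proj_pairs E) + (card (UNIV :: 'a set) - 2)"
proof -
  have "finite (proj_pairs E)" using assms(1) by (rule finite_proj_pairs)
  moreover have "proj_pairs E \<inter> (UNIV - {0, 1}) \<times> {0} = {}"
    using assms(2) by (auto simp: proj_pairs_def)
  ultimately show ?thesis
    using assms
    by (simp add: proj_pairs_insert_zero card_Un_disjoint card_cartesian_product card_UNIV_Diff_zero_one)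
qed

lemma Times_self_eq_noncollinear_Un_collinear:
  assumes zero: "0 \<notin> E"
  shows "E \<times> E = noncollinear_pairs E
    \<union> ((\<lambda>y. (y, y)) ` E \<union> (\<lambda>(a, w). (w, fscale a w)) ` proj_pairs E)"
proof (intro equalityI subsetI)
  fix p assume "p \<in> E \<times> E"
  then obtain y y' where yy': "p = (y, y')" "y \<in> E" "y' \<in> E" by blast
  show "p \<in> noncollinear_pairs E \<union> ((\<lambda>y. (y, y)) ` E \<union> (\<lambda>(a, w). (w, fscale a w)) ` proj_pairs E)"
  proof (cases "\<exists>c. y' = fscale c y")
    case True
    then obtain c where c: "y' = fscale c y" by blast
    then have "c \<noteq> 0" using yy'(3) zero by auto
    then have "c = 1 \<or> (c, y) \<in> proj_pairs E" using c yy' by (auto simp: proj_pairs_def)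
    then show ?thesis using c yy' by force
  qed (use yy' in \<open>auto simp: noncollinear_pairs_def\<close>)
qed (auto simp: noncollinear_pairs_def proj_pairs_def)

lemma card_noncollinear_pairs:
  fixes E :: "('b \<Rightarrow> 'a::{finite,field}) set"
  assumes fin: "finite E" and zero: "0 \<notin> E"
  shows "card (noncollinear_pairs E) + card E + card (proj_pairs E) = card E ^ 2"
proof -
  let ?diag = "(\<lambda>y. (y, y)) ` E"
  let ?scaled = "(\<lambda>(a, w). (w, fscale a w)) ` proj_pairs E"
  have fin_P: "finite (proj_pairs E)" using fin by (rule finite_proj_pairs)
  have "noncollinear_pairs E \<inter> (?diag \<union> ?scaled) = {}"
    by (auto simp: noncollinear_pairs_def proj_pairs_def dest: spec[of _ 1])
  moreover have "finite (noncollinear_pairs E)"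
  proof (rule finite_subset)
    show "noncollinear_pairs E \<subseteq> E \<times> E" by (auto simp: noncollinear_pairs_def)
  qed (use fin in simp)
  ultimately have "card (E \<times> E) = card (noncollinear_pairs E) + card (?diag \<union> ?scaled)"
    unfolding Times_self_eq_noncollinear_Un_collinear[OF zero] using fin fin_P
    by (intro card_Un_disjoint) auto
  moreover have "card (?diag \<union> ?scaled) = card ?diag + card ?scaled"
    using zero fin fin_P
    by (intro card_Un_disjoint) (auto simp: proj_pairs_def fscale_eq_self_iff dest: sym)
  moreover have "card ?diag = card E" by (rule card_image) (simp add: inj_on_def)
  moreover have "card ?scaled = card (proj_pairs E)"
    using zero by (intro card_image) (auto simp: inj_on_def proj_pairs_def)
  ultimately show ?thesis by (simp add: card_cartesian_product power2_eq_square)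
qed

section \<open>Second moment of a nondegenerate pairing\<close>

text \<open>Used with \<open>e = |E - {0}|\<close>, \<open>U = (q - 1) e - |proj_pairs (E - {0})|\<close> and \<open>z = 1\<close> iff
  \<open>0 \<in> E\<close>: it turns the second-moment bound for the nonzero vectors into one for \<open>E\<close>.\<close>
lemma second_moment_arith:
  fixes s N e U z :: real
  assumes s: "0 \<le> s" "s \<le> N" and e: "0 \<le> e" "e \<le> U" and z: "0 \<le> z" "z \<le> 1"
    and moment: "N * e ^ 2 \<le> (N - s) * (e ^ 2 + U)"
  shows "s * (e + z) ^ 2 \<le> N * (U + e + 2 * z)"
proof (cases "U = 0")
  case True
  then have "e = 0" using e by simp
  have "z ^ 2 \<le> 2 * z" using mult_right_mono[OF z(2) z(1)] z by (simp add: power2_eq_square)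
  then have "s * z ^ 2 \<le> N * (2 * z)" using s by (intro mult_mono) auto
  then show ?thesis using True \<open>e = 0\<close> by simp
next
  case False
  then have U: "U > 0" using e by simp
  have key: "s * (e ^ 2 + U) \<le> N * U" using moment by (simp add: algebra_simps)
  have "U * (e + z) ^ 2 \<le> (e ^ 2 + U) * (U + e + 2 * z)"
  proof -
    have "0 \<le> 2 * e * (1 - z) + z * (2 - z)" using e z by simp
    then have "0 \<le> U * ((U - e) + (2 * e * (1 - z) + z * (2 - z)))" using U e by simp
    moreover have "0 \<le> e ^ 3 + 2 * z * e ^ 2" using e z by simp
    moreover have "(e ^ 2 + U) * (U + e + 2 * z) - U * (e + z) ^ 2
        = e ^ 3 + 2 * z * e ^ 2 + U * ((U - e) + (2 * e * (1 - z) + z * (2 - z)))"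
      by (simp add: algebra_simps power2_eq_square power3_eq_cube)
    ultimately show ?thesis by linarith
  qed
  then have "s * (U * (e + z) ^ 2) \<le> s * ((e ^ 2 + U) * (U + e + 2 * z))"
    using s(1) by (rule mult_left_mono)
  then have "U * (s * (e + z) ^ 2) \<le> s * (e ^ 2 + U) * (U + e + 2 * z)"
    by (simp add: ac_simps)
  also have "\<dots> \<le> N * U * (U + e + 2 * z)"
    using key e z U by (intro mult_right_mono) auto
  finally show ?thesis using U by (simp add: mult.commute mult.left_commute)
qed

locale nondegenerate_pairing =
  fixes pair :: "('j \<Rightarrow> 'a::{finite,field}) \<Rightarrow> ('i \<Rightarrow> 'a) \<Rightarrow> 'a"
    and A :: "('i \<Rightarrow> 'a) set" and B :: "('j \<Rightarrow> 'a) set"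
  assumes finite_A: "finite A"
    and subspace_A: "fun_space.subspace A"
    and subspace_B: "fun_space.subspace B"
    and add_right: "y \<in> B \<Longrightarrow> T \<in> A \<Longrightarrow> T' \<in> A \<Longrightarrow> pair y (T + T') = pair y T + pair y T'"
    and fscale_right: "y \<in> B \<Longrightarrow> T \<in> A \<Longrightarrow> pair y (fscale c T) = c * pair y T"
    and linear_left: "y \<in> B \<Longrightarrow> y' \<in> B \<Longrightarrow> T \<in> A \<Longrightarrow>
      pair (fscale a y + fscale b y') T = a * pair y T + b * pair y' T"
    and nondegenerate: "y \<in> B \<Longrightarrow> y \<noteq> 0 \<Longrightarrow> \<exists>T\<in>A. pair y T \<noteq> 0"
begin

lemma fscale_left: "y \<in> B \<Longrightarrow> T \<in> A \<Longrightarrow> pair (fscale c y) T = c * pair y T"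
  using linear_left[of y y T c 0] by simp

lemma exists_pair_eq:
  assumes "y \<in> B" "y \<noteq> 0"
  obtains T where "T \<in> A" "pair y T = v"
proof -
  obtain T0 where T0: "T0 \<in> A" "pair y T0 \<noteq> 0" using nondegenerate assms by blast
  show ?thesis
  proof
    show "fscale (v / pair y T0) T0 \<in> A" using subspace_A T0(1) by (rule fun_space.subspace_scale)
    show "pair y (fscale (v / pair y T0) T0) = v" using fscale_right assms T0 by simp
  qed
qed

lemma exists_pair_eq2:
  assumes y: "y \<in> B" "y \<noteq> 0" and y': "y' \<in> B" "\<forall>c. y' \<noteq> fscale c y"
  obtains T where "T \<in> A" "pair y T = v" "pair y' T = v'"
proof -
  obtain T1 where T1: "T1 \<in> A" "pair y T1 = 1" using exists_pair_eq[OF y] .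
  define \<delta> where "\<delta> = pair y' T1"
  define u where "u = y' - fscale \<delta> y"
  have u_B: "u \<in> B"
    unfolding u_def using subspace_B y(1) y'(1)
    by (intro fun_space.subspace_diff fun_space.subspace_scale)
  have pair_u: "pair u T = pair y' T - \<delta> * pair y T" if "T \<in> A" for T
    using linear_left[OF y'(1) y(1) that, of 1 "- \<delta>"] unfolding u_def by simp
  have "u \<noteq> 0" using y'(2) unfolding u_def by simp
  obtain T2 where T2: "T2 \<in> A" "pair u T2 = v' - \<delta> * v" using exists_pair_eq[OF u_B \<open>u \<noteq> 0\<close>] .
  \<comment> \<open>The system is triangular for the functionals \<open>pair u\<close> and \<open>pair y\<close>, as \<open>pair u T1 = 0\<close>.\<close>
  define T where "T = fscale (v - pair y T2) T1 + T2"
  have T_A: "T \<in> A"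
    unfolding T_def using subspace_A T1(1) T2(1)
    by (intro fun_space.subspace_add fun_space.subspace_scale)
  have T1_A': "fscale (v - pair y T2) T1 \<in> A"
    using subspace_A T1(1) by (rule fun_space.subspace_scale)
  have pair_y: "pair y T = v"
    unfolding T_def using T1 T2(1) T1_A' by (simp add: add_right[OF y(1)] fscale_right[OF y(1)])
  have "pair u T1 = 0" using pair_u[OF T1(1)] T1(2) by (simp add: \<delta>_def)
  then have "pair u T = v' - \<delta> * v"
    unfolding T_def using T1_A' T1(1) T2 by (simp add: add_right[OF u_B] fscale_right[OF u_B])
  then have "pair y' T = v'" using pair_u[OF T_A] pair_y by simp
  with T_A pair_y show ?thesis by (rule that)
qed

lemma card_eq_mult_card_level_set:
  assumes "y \<in> B" "y \<noteq> 0"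
  shows "card A = card (UNIV :: 'a set) * card {T\<in>A. pair y T = v}"
  using finite_A subspace_A add_right[OF assms(1)]
proof (rule card_subspace_eq_mult_card_fiber)
  show "\<exists>T\<in>A. pair y T = u" for u using exists_pair_eq[OF assms, of u] by blast
qed

lemma card_eq_mult_card_level_set2:
  assumes "y \<in> B" "y \<noteq> 0" "y' \<in> B" "\<forall>c. y' \<noteq> fscale c y"
  shows "card A = card (UNIV :: 'a set) ^ 2 * card {T\<in>A. pair y T = v \<and> pair y' T = v'}"
proof -
  have "card A = card (UNIV :: ('a \<times> 'a) set) * card {T\<in>A. (pair y T, pair y' T) = (v, v')}"
  proof (rule card_subspace_eq_mult_card_fiber[OF finite_A subspace_A])
    show "(pair y (T + T'), pair y' (T + T')) = (pair y T, pair y' T) + (pair y T', pair y' T')"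
      if "T \<in> A" "T' \<in> A" for T T'
      using that assms by (simp add: add_right)
    show "\<exists>T\<in>A. (pair y T, pair y' T) = u" for u
      using exists_pair_eq2[OF assms, of "fst u" "snd u"] by (metis prod.collapse)
  qed
  moreover have "card (UNIV :: ('a \<times> 'a) set) = card (UNIV :: 'a set) ^ 2"
    by (simp flip: UNIV_Times_UNIV add: card_cartesian_product power2_eq_square)
  ultimately show ?thesis by simp
qed

lemma sum_card_hits:
  assumes E: "E \<subseteq> B" "finite E" "0 \<notin> E"
  shows "card (UNIV :: 'a set) * (\<Sum>T\<in>A. card {y\<in>E. pair y T = t}) = card E * card A"
proof -
  have "card (UNIV :: 'a set) * (\<Sum>T\<in>A. card {y\<in>E. pair y T = t})
      = (\<Sum>y\<in>E. card (UNIV :: 'a set) * card {T\<in>A. pair y T = t})"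
    by (simp add: sum_card_filter_swap[OF finite_A E(2)] sum_distrib_left)
  also have "\<dots> = (\<Sum>y\<in>E. card A)"
    using E by (intro sum.cong refl card_eq_mult_card_level_set[symmetric]) auto
  finally show ?thesis by simp
qed

lemma card_common_level_set:
  assumes y: "y \<in> B" "y \<noteq> 0" and y': "y' \<in> B" and t: "t \<noteq> 0"
  shows "card (UNIV :: 'a set) ^ 2 * card {T\<in>A. pair y T = t \<and> pair y' T = t}
    = (if y' = y then card (UNIV :: 'a set) * card A
       else if \<forall>c. y' \<noteq> fscale c y then card A else 0)"
proof (cases "\<forall>c. y' \<noteq> fscale c y")
  case True
  moreover have "y' \<noteq> y" using True[rule_format, of 1] by auto
  ultimately show ?thesis using card_eq_mult_card_level_set2[OF y y'] by simp
next
  case False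
  then obtain c where c: "y' = fscale c y" by blast
  show ?thesis
  proof (cases "c = 1")
    case True
    then show ?thesis using c card_eq_mult_card_level_set[OF y, of t] by (simp add: power2_eq_square)
  next
    case False
    then have "pair y' T \<noteq> t" if "T \<in> A" "pair y T = t" for T
      using that c y(1) t by (simp add: fscale_left)
    then have empty: "{T\<in>A. pair y T = t \<and> pair y' T = t} = {}" by blast
    have "y' \<noteq> y" using c False y(2) fscale_eq_self_iff[of c y] by auto
    then show ?thesis unfolding empty using c by auto
  qed
qed

lemma sum_card_hits_squared:
  assumes E: "E \<subseteq> B" "finite E" "0 \<notin> E" and t: "t \<noteq> 0"
  shows "card (UNIV :: 'a set) ^ 2 * (\<Sum>T\<in>A. card {y\<in>E. pair y T = t} ^ 2)
    = card A * (card (UNIV :: 'a set) * card E + card (noncollinear_pairs E))"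
proof -
  let ?q = "card (UNIV :: 'a set)" and ?N = "card A"
  let ?hit = "\<lambda>T p. pair (fst p) T = t \<and> pair (snd p) T = t"
  have square: "card {y\<in>E. pair y T = t} ^ 2 = card {p\<in>E \<times> E. ?hit T p}" for T
  proof -
    have "{p\<in>E \<times> E. ?hit T p} = {y\<in>E. pair y T = t} \<times> {y\<in>E. pair y T = t}" by auto
    then show ?thesis by (simp add: card_cartesian_product power2_eq_square)
  qed
  have "?q ^ 2 * (\<Sum>T\<in>A. card {y\<in>E. pair y T = t} ^ 2)
      = (\<Sum>p\<in>E \<times> E. ?q ^ 2 * card {T\<in>A. ?hit T p})"
    unfolding square using E(2) by (simp add: sum_card_filter_swap[OF finite_A] sum_distrib_left)
  also have "\<dots> = (\<Sum>p\<in>E \<times> E. (if fst p = snd p then ?q * ?N else 0)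
      + (if p \<in> noncollinear_pairs E then ?N else 0))"
  proof (rule sum.cong[OF refl])
    fix p assume "p \<in> E \<times> E"
    then obtain y y' where p: "p = (y, y')" and y: "y \<in> E" and y': "y' \<in> E" by blast
    then have "y \<in> B" "y \<noteq> 0" "y' \<in> B" using E by auto
    from card_common_level_set[OF this t]
    show "?q ^ 2 * card {T\<in>A. ?hit T p}
        = (if fst p = snd p then ?q * ?N else 0) + (if p \<in> noncollinear_pairs E then ?N else 0)"
      using y y' by (auto simp: p noncollinear_pairs_def dest: spec[of _ 1])
  qed
  also have "\<dots> = ?q * ?N * card {p\<in>E \<times> E. fst p = snd p} + ?N * card (noncollinear_pairs E)"
  proof -
    have "noncollinear_pairs E = {p\<in>E \<times> E. p \<in> noncollinear_pairs E}"
      by (auto simp: noncollinear_pairs_def)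
    then show ?thesis using E(2) by (simp add: sum.distrib sum.inter_filter[symmetric])
  qed
  also have "card {p\<in>E \<times> E. fst p = snd p} = card E"
  proof -
    have "{p\<in>E \<times> E. fst p = snd p} = (\<lambda>y. (y, y)) ` E" by auto
    then show ?thesis by (simp add: card_image inj_on_def)
  qed
  finally show ?thesis by (simp add: algebra_simps)
qed

lemma second_moment_bound:
  assumes E: "E \<subseteq> B" "finite E" "0 \<notin> E" and t: "t \<noteq> 0" and S: "S \<subseteq> A"
    and avoid: "\<And>T y. T \<in> S \<Longrightarrow> y \<in> E \<Longrightarrow> pair y T \<noteq> t"
  shows "real (card A) * real (card E) ^ 2 \<le> (real (card A) - real (card S))
    * (real (card (UNIV :: 'a set)) * real (card E) + real (card (noncollinear_pairs E)))"
proof -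
  define q where "q = real (card (UNIV :: 'a set))"
  define N where "N = real (card A)"
  define C where "C = real (card (noncollinear_pairs E))"
  define h where "h T = real (card {y\<in>E. pair y T = t})" for T
  have "h T = 0" if "T \<in> S" for T
  proof -
    have empty: "{y\<in>E. pair y T = t} = {}" using avoid[OF that] by blast
    show ?thesis unfolding h_def empty by simp
  qed
  then have CS: "(\<Sum>T\<in>A. h T) ^ 2 \<le> (N - real (card S)) * (\<Sum>T\<in>A. h T ^ 2)"
    unfolding N_def using finite_A S by (rule sum_squared_le_sum_of_squares_vanishing[rotated 2])
  have m1: "q * (\<Sum>T\<in>A. h T) = real (card E) * N"
    using arg_cong[OF sum_card_hits[OF E, of t], of real] by (simp add: q_def N_def h_def)
  have m2: "q ^ 2 * (\<Sum>T\<in>A. h T ^ 2) = N * (q * real (card E) + C)"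
    using arg_cong[OF sum_card_hits_squared[OF E t], of real] by (simp add: q_def N_def C_def h_def)
  have "N * (N * real (card E) ^ 2) = (q * (\<Sum>T\<in>A. h T)) ^ 2"
    by (simp add: m1 power2_eq_square)
  also have "\<dots> \<le> q ^ 2 * ((N - real (card S)) * (\<Sum>T\<in>A. h T ^ 2))"
    using CS by (simp add: power_mult_distrib mult_left_mono)
  also have "\<dots> = N * ((N - real (card S)) * (q * real (card E) + C))"
    unfolding mult.left_commute[of "q ^ 2"] m2 by (simp only: ac_simps)
  finally have "N * (N * real (card E) ^ 2) \<le> N * ((N - real (card S)) * (q * real (card E) + C))" .
  moreover have "N > 0"
    using finite_A fun_space.subspace_0[OF subspace_A] by (auto simp: N_def card_gt_0_iff)
  ultimately show ?thesis by (simp add: q_def N_def C_def)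
qed

lemma card_avoiding_le:
  assumes E: "E \<subseteq> B" "finite E" and t: "t \<noteq> 0" and S: "S \<subseteq> A"
    and avoid: "\<And>T y. T \<in> S \<Longrightarrow> y \<in> E \<Longrightarrow> pair y T \<noteq> t"
  shows "real (card S) * real (card E) ^ 2
    \<le> real (card A) * (real (card (UNIV :: 'a set)) * real (card E) - real (card (proj_pairs E)))"
proof -
  define E0 where "E0 = E - {0}"
  define z :: real where "z = (if 0 \<in> E then 1 else 0)"
  define q where "q = real (card (UNIV :: 'a set))"
  define e where "e = real (card E0)"
  define P0 where "P0 = real (card (proj_pairs E0))"
  have E0: "E0 \<subseteq> B" "finite E0" "0 \<notin> E0" using E by (auto simp: E0_def)
  have card_E: "real (card E) = e + z"
    using card_Suc_Diff1[OF E(2), of 0] by (cases "0 \<in> E") (auto simp: e_def z_def E0_def)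
  have "E = (if 0 \<in> E then insert 0 E0 else E0)" by (auto simp: E0_def)
  then have card_P: "real (card (proj_pairs E)) = P0 + z * (q - 2)"
    using card_proj_pairs_insert_zero[OF E0(2,3)]
    by (cases "0 \<in> E") (auto simp: z_def P0_def q_def real_card_UNIV_minus_2)
  have "real (card A) * e ^ 2
      \<le> (real (card A) - real (card S)) * (q * e + real (card (noncollinear_pairs E0)))"
    using second_moment_bound[OF E0 t S] avoid by (auto simp: E0_def e_def q_def)
  also have "q * e + real (card (noncollinear_pairs E0)) = e ^ 2 + ((q - 1) * e - P0)"
    using arg_cong[OF card_noncollinear_pairs[OF E0(2,3)], of real]
    by (simp add: e_def P0_def algebra_simps)
  finally have "real (card S) * (e + z) ^ 2 \<le> real (card A) * (((q - 1) * e - P0) + e + 2 * z)"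
    using card_proj_pairs_le[OF E0(2)] S finite_A
    by (intro second_moment_arith) (auto simp: card_mono z_def e_def P0_def q_def algebra_simps)
  moreover have "((q - 1) * e - P0) + e + 2 * z = q * real (card E) - real (card (proj_pairs E))"
    unfolding card_E card_P by (simp add: algebra_simps)
  ultimately show ?thesis unfolding card_E[symmetric] q_def by simp
qed

end

lemma insert_slot_pairing:
  assumes form: "nlinear_form d n w" and k: "k \<in> {1..n}"
    and A: "A \<subseteq> tens d (n - 1)" "fun_space.subspace A"
    and B: "B \<subseteq> vecs d" "fun_space.subspace B"
    and nd: "nondeg n w A B k"
  shows "nondegenerate_pairing (\<lambda>y T. w (insert_slot n k y T)) A B"
proof unfold_locales
  have tens: "insert_slot n k y T \<in> tens d n" if "y \<in> B" "T \<in> A" for y T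
    using insert_slot_tens[OF _ _ k] A(1) B(1) that by blast
  show "finite A" using A(1) finite_tens by (rule finite_subset)
  show "fun_space.subspace A" "fun_space.subspace B" by (fact A(2), fact B(2))
  show "w (insert_slot n k y (T + T')) = w (insert_slot n k y T) + w (insert_slot n k y T')"
    if "y \<in> B" "T \<in> A" "T' \<in> A" for y T T'
    using that by (simp add: insert_slot_add nlinear_form_add[OF form] tens)
  show "w (insert_slot n k y (fscale c T)) = c * w (insert_slot n k y T)"
    if "y \<in> B" "T \<in> A" for y T c
    using that by (simp add: insert_slot_fscale nlinear_form_fscale[OF form] tens)
  show "w (insert_slot n k (fscale a y + fscale b y') T)
      = a * w (insert_slot n k y T) + b * w (insert_slot n k y' T)"
    if "y \<in> B" "y' \<in> B" "T \<in> A" for y y' T a b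
    using that
    by (simp add: insert_slot_linear_left nlinear_form_add[OF form] nlinear_form_fscale[OF form]
        tens tens_fscale)
  show "\<exists>T\<in>A. w (insert_slot n k y T) \<noteq> 0" if "y \<in> B" "y \<noteq> 0" for y
    using nd that by (simp add: nondeg_def zero_fun_def)
qed

section \<open>The threshold\<close>

lemma power_gt_of_gt_root:
  fixes x a c Y :: real
  assumes gt: "a powr (c / real n) * Y powr (1 / real n) < x" and a: "0 < a" and Y: "0 < Y"
    and n: "0 < n"
  shows "a powr c * Y < x ^ n"
proof -
  have "a powr c * Y = (a powr (c / real n) * Y powr (1 / real n)) ^ n"
    using a Y n by (simp add: power_mult_distrib powr_power)
  also have "\<dots> < x ^ n" using gt a Y n by (intro power_strict_mono) auto
  finally show ?thesis .
qed

lemma threshold_imp_power_gt: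
  fixes E :: "(nat \<Rightarrow> 'a::{finite,field}) set" and \<alpha> :: real
  assumes q3: "3 \<le> card (UNIV :: 'a set)" and n: "1 \<le> n" and fin: "finite E"
    and pidx: "has_proj_index E \<alpha>"
    and threshold: "real (card (UNIV :: 'a set)) powr ((real r + real n - 1) / real n)
      * (1 - \<alpha> * (1 - 2 / real (card (UNIV :: 'a set)))) powr (1 / real n) < real (card E)"
  shows "real (card (UNIV :: 'a set)) ^ (r + n - 1)
      * (real (card (UNIV :: 'a set)) * real (card E) - real (card (proj_pairs E)))
    < real (card (UNIV :: 'a set)) * real (card E) ^ (n + 1)"
proof -
  define q where "q = real (card (UNIV :: 'a set))"
  define e where "e = real (card E)"
  define P where "P = real (card (proj_pairs E))"
  define Y where "Y = 1 - \<alpha> * (1 - 2 / q)"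
  have q: "3 \<le> q" using q3 by (simp add: q_def)
  have "0 < e" using threshold unfolding e_def by (smt (verit) mult_nonneg_nonneg powr_ge_zero)
  have "P \<le> (q - 2) * e" using card_proj_pairs_le[OF fin] by (simp add: P_def q_def e_def)
  then have "0 < q * e - P" using \<open>0 < e\<close> by (simp add: algebra_simps)
  then have pos: "0 < 1 - P / (q * e)" using \<open>0 < e\<close> q by (simp add: field_simps)
  have "\<alpha> \<le> P / ((q - 2) * e)"
    using pidx by (simp add: has_proj_index_def P_def q_def e_def proj_pairs_def)
  then have "\<alpha> * ((q - 2) / q) \<le> P / ((q - 2) * e) * ((q - 2) / q)"
    using q by (intro mult_right_mono) auto
  also have "\<dots> = P / (q * e)" using q \<open>0 < e\<close> by (simp add: field_simps)
  also have "(q - 2) / q = 1 - 2 / q" using q by (simp add: field_simps)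
  finally have Y: "1 - P / (q * e) \<le> Y" by (simp add: Y_def)
  have "q powr (real r + real n - 1) * Y < e ^ n"
    using power_gt_of_gt_root[of q "real r + real n - 1" n Y e] threshold pos Y q n
    by (simp add: q_def e_def Y_def)
  moreover have "q powr (real r + real n - 1) = q ^ (r + n - 1)"
    using q n by (simp add: powr_realpow[symmetric] of_nat_diff)
  ultimately have "q ^ (r + n - 1) * (1 - P / (q * e)) < e ^ n"
    using Y q by (smt (verit) mult_left_mono zero_le_power)
  then have "q ^ (r + n - 1) * (1 - P / (q * e)) * (q * e) < e ^ n * (q * e)"
    using q \<open>0 < e\<close> by (intro mult_strict_right_mono) auto
  then show ?thesis using q \<open>0 < e\<close> by (simp add: q_def e_def P_def field_simps)
qed

lemma card_boxpow_gt_of_threshold: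
  fixes E :: "(nat \<Rightarrow> 'a::{finite,field}) set" and \<alpha> :: real
  assumes q3: "3 \<le> card (UNIV :: 'a set)" and n: "2 \<le> n" and fin: "finite E"
    and pidx: "has_proj_index E \<alpha>"
    and threshold: "real (card (UNIV :: 'a set)) powr ((real r + real n - 1) / real n)
      * (1 - \<alpha> * (1 - 2 / real (card (UNIV :: 'a set)))) powr (1 / real n) < real (card E)"
  shows "real (card (UNIV :: 'a set)) ^ r
      * (real (card (UNIV :: 'a set)) * real (card E) - real (card (proj_pairs E)))
    < real (card (boxpow E (n - 1))) * real (card E) ^ 2"
proof -
  define q where "q = real (card (UNIV :: 'a set))"
  define e where "e = real (card E)"
  define s where "s = real (card (boxpow E (n - 1)))"
  define D where "D = q * e - real (card (proj_pairs E))"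
  have q: "0 < q" using q3 by (simp add: q_def)
  have "q ^ (r + n - 1) * D < q * e ^ (n + 1)"
    using threshold_imp_power_gt[OF q3 _ fin pidx threshold] n by (simp add: q_def e_def D_def)
  moreover have "q ^ (r + n - 1) = (q * q ^ (n - 2)) * q ^ r"
  proof -
    have "r + n - 1 = Suc (n - 2 + r)" using n by simp
    then show ?thesis by (simp only: power_add power_Suc mult.assoc)
  qed
  moreover have "e ^ (n + 1) = e ^ (n - 1) * e ^ 2"
    using n by (simp flip: power_add)
  moreover have "e ^ (n - 1) \<le> s * q ^ (n - 2)"
    using card_boxpow_bound[OF fin, of "n - 1"] n by (simp add: e_def s_def q_def numeral_2_eq_2)
  ultimately have "(q * q ^ (n - 2)) * (q ^ r * D) < (q * q ^ (n - 2)) * (s * e ^ 2)"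
    using q by (smt (verit) mult.assoc mult.left_commute mult_left_mono mult_right_mono
        zero_le_power zero_le_power2)
  then show ?thesis using q by (simp add: q_def e_def s_def D_def)
qed

theorem mainTheorem1:
  fixes w :: "(nat list \<Rightarrow> 'a::{finite,field}) \<Rightarrow> 'a"
    and E B :: "(nat \<Rightarrow> 'a) set"
    and A :: "(nat list \<Rightarrow> 'a) set"
    and d n r k :: nat and \<alpha> :: real
  assumes q3: "card (UNIV :: 'a set) \<ge> 3"
    and n2: "n \<ge> 2"
    and form: "nlinear_form d n w"
    and EV: "E \<subseteq> vecs d"
    and pidx: "has_proj_index E \<alpha>"
    and AT: "A \<subseteq> tens d (n - 1)" and Asub: "module.subspace fscale A"
    and Adim: "vector_space.dim fscale A = r"
    and BV: "B \<subseteq> vecs d" and Bsub: "module.subspace fscale B"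
    and k: "k \<in> {1..n}"
    and h1: "boxpow E (n - 1) \<subseteq> A"
    and h2: "E \<subseteq> B"
    and h3: "nondeg n w A B k"
    and h4: "real (card E) > real (card (UNIV :: 'a set)) powr ((real r + real n - 1) / real n)
                * (1 - \<alpha> * (1 - 2 / real (card (UNIV :: 'a set)))) powr (1 / real n)"
  shows "UNIV - {0} \<subseteq> form_image w E n"
proof
  fix t :: 'a assume "t \<in> UNIV - {0}"
  then have t: "t \<noteq> 0" by simp
  show "t \<in> form_image w E n"
  proof (rule ccontr)
    assume t_notin: "t \<notin> form_image w E n"
    interpret nondegenerate_pairing "\<lambda>y T. w (insert_slot n k y T)" A B
      by (rule insert_slot_pairing[OF form k AT Asub BV Bsub h3])
    let ?q = "real (card (UNIV :: 'a set))"
    let ?D = "?q * real (card E) - real (card (proj_pairs E))"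
    have fin_E: "finite E" using EV finite_vecs by (rule finite_subset)
    have "real (card (boxpow E (n - 1))) * real (card E) ^ 2 \<le> real (card A) * ?D"
    proof (rule card_avoiding_le[OF h2 fin_E t h1])
      show "w (insert_slot n k y T) \<noteq> t" if "T \<in> boxpow E (n - 1)" "y \<in> E" for T y
        using t_notin insert_slot_boxpow[OF that k] unfolding form_image_def by blast
    qed
    also have "\<dots> \<le> ?q ^ r * ?D"
    proof (rule mult_right_mono)
      show "real (card A) \<le> ?q ^ r"
        using card_subspace_le[OF finite_A] Adim by (metis of_nat_le_iff of_nat_power)
      show "0 \<le> ?D" using card_proj_pairs_le[OF fin_E] by (simp add: algebra_simps)
    qed
    finally show False
      using card_boxpow_gt_of_threshold[OF q3 n2 fin_E pidx h4] by linarith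
  qed
qed

end
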